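(* Let $p\in\mathbb{C}[z_1,\dots,z_d]$ have no zeros in $\mathbb{D}^d$ and vanish to order $M$ at $u=(1,\dots,1)$, with $p(u-\zeta)=\sum_{j\ge M}P_j(\zeta)$ ($P_j$ homogeneous of degree $j$). Let $q\in\mathbb{C}[z_1,\dots,z_d]$ vanish to order at least $M$ at $u$, with $q(u-\zeta)=\sum_{j\ge0}Q_j(\zeta)$ ($Q_j$ homogeneous of degree $j$), and let $f=q/p$. Then $f$ has a limit along non-tangential approach regions to $u$ if and only if $Q_M=bP_M$ for some constant $b\in\mathbb{C}$; in this case the non-tangential limit equals $b$.
   Context: $\mathbb{D}$ is the open unit disk; $RHP=\{\zeta\in\mathbb{C}:\mathrm{Re}\,\zeta>0\}$. A polynomial vanishes to order $M$ at $u$ if the lowest-degree nonzero homogeneous term of its expansion in $\zeta$ at $u$ (via $z=u-\zeta$) has degree $M$. For $\zeta\in RHP^d$ let $D_\zeta=\{|\zeta_1|,\dots,|\zeta_d|,\mathrm{Re}\,\zeta_1,\dots,\mathrm{Re}\,\zeta_d\}$, and for $c>1$ let $AR_c=\{\zeta\in RHP^d:1/c\le x/y\le c\ \forall x,y\in D_\zeta\}$. "$f$ has a limit along non-tangential approach regions to $u$" means there is $L$ with $\lim f(u-\zeta)=L$ as $\zeta\to0$ within $AR_c$, for every $c>1$. *)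

theory Defs
  imports "HOL-Analysis.Analysis"
begin

text \<open>Multivariate polynomials in d variables (d encoded by the finite index type 'd)
are represented by their finitely supported coefficient function in the expansion
around the point u = (1,...,1) in the variable zeta = u - z:
  p z = sum over alpha of a alpha * prod_i (1 - z_i)^(alpha i).
Every polynomial in C[z_1,...,z_d] has exactly one such representation.\<close>

type_synonym 'd multiidx = "'d \<Rightarrow> nat"

definition mdeg :: "('d::finite) multiidx \<Rightarrow> nat" where
  "mdeg \<alpha> = (\<Sum>i\<in>UNIV. \<alpha> i)"

definition monom_val :: "('d::finite) multiidx \<Rightarrow> complex^'d \<Rightarrow> complex" where
  "monom_val \<alpha> \<zeta> = (\<Prod>i\<in>UNIV. (\<zeta> $ i) ^ (\<alpha> i))"

definition uvec :: "complex^('d::finite)" where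
  "uvec = (\<chi> i. 1)"

definition poly_at_u :: "(('d::finite) multiidx \<Rightarrow> complex) \<Rightarrow> complex^'d \<Rightarrow> complex" where
  "poly_at_u a z = (\<Sum>\<alpha>\<in>{\<alpha>. a \<alpha> \<noteq> 0}. a \<alpha> * monom_val \<alpha> (uvec - z))"

text \<open>The homogeneous term of degree j of the expansion p(u - zeta) = sum_j P_j(zeta).\<close>
definition hom_part :: "(('d::finite) multiidx \<Rightarrow> complex) \<Rightarrow> nat \<Rightarrow> complex^'d \<Rightarrow> complex" where
  "hom_part a j \<zeta> = (\<Sum>\<alpha>\<in>{\<alpha>. a \<alpha> \<noteq> 0 \<and> mdeg \<alpha> = j}. a \<alpha> * monom_val \<alpha> \<zeta>)"

definition vanishes_to_order :: "(('d::finite) multiidx \<Rightarrow> complex) \<Rightarrow> nat \<Rightarrow> bool" where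
  "vanishes_to_order a M \<longleftrightarrow>
     (\<forall>j<M. \<forall>\<zeta>. hom_part a j \<zeta> = 0) \<and> (\<exists>\<zeta>. hom_part a M \<zeta> \<noteq> 0)"

definition vanishes_to_order_at_least :: "(('d::finite) multiidx \<Rightarrow> complex) \<Rightarrow> nat \<Rightarrow> bool" where
  "vanishes_to_order_at_least a M \<longleftrightarrow> (\<forall>j<M. \<forall>\<zeta>. hom_part a j \<zeta> = 0)"

definition polydisc :: "(complex^('d::finite)) set" where
  "polydisc = {z. \<forall>i. norm (z $ i) < 1}"

definition RHP_d :: "(complex^('d::finite)) set" where
  "RHP_d = {\<zeta>. \<forall>i. Re (\<zeta> $ i) > 0}"

definition Dset :: "complex^('d::finite) \<Rightarrow> real set" where
  "Dset \<zeta> = range (\<lambda>i. norm (\<zeta> $ i)) \<union> range (\<lambda>i. Re (\<zeta> $ i))"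

definition AR :: "real \<Rightarrow> (complex^('d::finite)) set" where
  "AR c = {\<zeta> \<in> RHP_d. \<forall>x\<in>Dset \<zeta>. \<forall>y\<in>Dset \<zeta>. 1/c \<le> x/y \<and> x/y \<le> c}"

definition nt_limit :: "(complex^('d::finite) \<Rightarrow> complex) \<Rightarrow> complex \<Rightarrow> bool" where
  "nt_limit f L \<longleftrightarrow> (\<forall>c>1. ((\<lambda>\<zeta>. f (uvec - \<zeta>)) \<longlongrightarrow> L) (at 0 within AR c))"

end

(*
  Expanding at u, p(u - \<zeta>) = P_M(\<zeta>) + O(|\<zeta>|^(M+1)) and q(u - \<zeta>) = Q_M(\<zeta>) + O(|\<zeta>|^(M+1)).
  On a complex line through a point of RHP^d the rescaled functions p(u - t\<zeta>)/t^M are zero-free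
  for small t > 0 (u - t\<zeta> lies in the polydisc) and converge locally uniformly to P_M(\<zeta>);
  by Hurwitz's theorem P_M has no zeros in RHP^d. Homogeneity and compactness then give
  |P_M(\<zeta>)| \<ge> k |\<zeta>|^M on each approach region AR_c, so Q_M = b P_M forces
  f(u - \<zeta>) - b = O(|\<zeta>|) there. Conversely, a non-tangential limit L yields Q_M = L P_M along
  every ray in RHP^d, and hence everywhere by the identity theorem on complex lines.
*)
theory Submission
  imports Defs "HOL-Complex_Analysis.Great_Picard"
begin

definition shifted_poly :: "(('d::finite) multiidx \<Rightarrow> complex) \<Rightarrow> complex^'d \<Rightarrow> complex" where
  "shifted_poly a \<zeta> = (\<Sum>\<alpha>\<in>{\<alpha>. a \<alpha> \<noteq> 0}. a \<alpha> * monom_val \<alpha> \<zeta>)"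

lemma poly_at_u_diff: "poly_at_u a (uvec - \<zeta>) = shifted_poly a \<zeta>"
  by (simp add: poly_at_u_def shifted_poly_def)

lemma vanishes_to_order_imp_at_least:
  "vanishes_to_order a M \<Longrightarrow> vanishes_to_order_at_least a M"
  by (simp add: vanishes_to_order_def vanishes_to_order_at_least_def)

lemma shifted_poly_minus_hom_part:
  assumes fin: "finite {\<alpha>. a \<alpha> \<noteq> 0}" and van: "vanishes_to_order_at_least a M"
  shows "shifted_poly a \<zeta> - hom_part a M \<zeta> =
    (\<Sum>\<alpha>\<in>{\<alpha>. a \<alpha> \<noteq> 0 \<and> M < mdeg \<alpha>}. a \<alpha> * monom_val \<alpha> \<zeta>)"
proof -
  define S where "S = {\<alpha>. a \<alpha> \<noteq> 0}"
  define g where "g = (\<lambda>\<alpha>. a \<alpha> * monom_val \<alpha> \<zeta>)"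
  have "finite S" using fin S_def by simp
  have "(\<Sum>\<alpha>\<in>{\<alpha>\<in>S. mdeg \<alpha> < M}. g \<alpha>)
      = (\<Sum>j<M. \<Sum>\<alpha>\<in>{\<alpha>\<in>{\<alpha>\<in>S. mdeg \<alpha> < M}. mdeg \<alpha> = j}. g \<alpha>)"
    by (rule sum.group[symmetric]) (use \<open>finite S\<close> in auto)
  also have "\<dots> = (\<Sum>j<M. hom_part a j \<zeta>)"
    unfolding hom_part_def S_def g_def by (intro sum.cong refl) auto
  finally have low: "(\<Sum>\<alpha>\<in>{\<alpha>\<in>S. mdeg \<alpha> < M}. g \<alpha>) = (\<Sum>j<M. hom_part a j \<zeta>)" .
  have "shifted_poly a \<zeta> = (\<Sum>\<alpha>\<in>{\<alpha>\<in>S. mdeg \<alpha> < M}. g \<alpha>) + (\<Sum>\<alpha>\<in>{\<alpha>\<in>S. mdeg \<alpha> = M}. g \<alpha>)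
      + (\<Sum>\<alpha>\<in>{\<alpha>\<in>S. M < mdeg \<alpha>}. g \<alpha>)"
    unfolding shifted_poly_def S_def[symmetric] g_def[symmetric] sum.inter_filter[OF \<open>finite S\<close>]
      sum.distrib[symmetric]
    by (intro sum.cong) auto
  then show ?thesis
    using van low by (simp add: vanishes_to_order_at_least_def hom_part_def S_def g_def)
qed

lemma monom_val_scaleR: "monom_val \<alpha> (t *\<^sub>R \<zeta>) = of_real t ^ mdeg \<alpha> * monom_val \<alpha> \<zeta>"
  unfolding monom_val_def mdeg_def vector_scaleR_component
  by (simp add: scaleR_conv_of_real power_mult_distrib prod.distrib power_sum)

lemma hom_part_scaleR: "hom_part a j (t *\<^sub>R \<zeta>) = of_real t ^ j * hom_part a j \<zeta>"
  by (simp add: hom_part_def monom_val_scaleR sum_distrib_left mult_ac)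

lemma norm_monom_val_le: "norm (monom_val \<alpha> \<zeta>) \<le> norm \<zeta> ^ mdeg \<alpha>"
proof -
  have "norm (monom_val \<alpha> \<zeta>) = (\<Prod>i\<in>UNIV. norm (\<zeta> $ i) ^ \<alpha> i)"
    by (simp add: monom_val_def prod_norm[symmetric] norm_power)
  also have "\<dots> \<le> (\<Prod>i\<in>UNIV. norm \<zeta> ^ \<alpha> i)"
    by (intro prod_mono conjI power_mono Finite_Cartesian_Product.norm_nth_le) auto
  also have "\<dots> = norm \<zeta> ^ mdeg \<alpha>" by (simp add: mdeg_def power_sum)
  finally show ?thesis .
qed

lemma shifted_poly_minus_hom_part_bound:
  assumes fin: "finite {\<alpha>. a \<alpha> \<noteq> 0}" and van: "vanishes_to_order_at_least a M"
  obtains C where "C \<ge> 0"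
    and "\<And>\<zeta>. norm \<zeta> \<le> 1 \<Longrightarrow> norm (shifted_poly a \<zeta> - hom_part a M \<zeta>) \<le> C * norm \<zeta> ^ Suc M"
proof
  define C where "C = (\<Sum>\<alpha>\<in>{\<alpha>. a \<alpha> \<noteq> 0}. norm (a \<alpha>))"
  show "C \<ge> 0" unfolding C_def by (simp add: sum_nonneg)
  fix \<zeta> :: "complex^'a" assume \<zeta>: "norm \<zeta> \<le> 1"
  let ?T = "{\<alpha>. a \<alpha> \<noteq> 0 \<and> M < mdeg \<alpha>}"
  have "norm (shifted_poly a \<zeta> - hom_part a M \<zeta>) \<le> (\<Sum>\<alpha>\<in>?T. norm (a \<alpha>) * norm (monom_val \<alpha> \<zeta>))"
    unfolding shifted_poly_minus_hom_part[OF fin van] by (rule norm_sum[THEN order_trans]) (simp add: norm_mult)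
  also have "\<dots> \<le> (\<Sum>\<alpha>\<in>?T. norm (a \<alpha>) * norm \<zeta> ^ Suc M)"
  proof (intro sum_mono mult_left_mono)
    fix \<alpha> assume "\<alpha> \<in> ?T"
    then have "norm (monom_val \<alpha> \<zeta>) \<le> norm \<zeta> ^ mdeg \<alpha>" "Suc M \<le> mdeg \<alpha>"
      by (auto simp: norm_monom_val_le)
    then show "norm (monom_val \<alpha> \<zeta>) \<le> norm \<zeta> ^ Suc M"
      using \<zeta> power_decreasing[of "Suc M" "mdeg \<alpha>" "norm \<zeta>"] by simp
  qed simp
  also have "\<dots> \<le> C * norm \<zeta> ^ Suc M"
    unfolding C_def sum_distrib_right[symmetric]
    by (intro mult_right_mono sum_mono2 fin) auto
  finally show "norm (shifted_poly a \<zeta> - hom_part a M \<zeta>) \<le> C * norm \<zeta> ^ Suc M" .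
qed

lemma scaled_shifted_poly_bound:
  assumes fin: "finite {\<alpha>. a \<alpha> \<noteq> 0}" and van: "vanishes_to_order_at_least a M"
  obtains C where "C \<ge> 0" and "\<And>t \<zeta>. 0 < t \<Longrightarrow> t * norm \<zeta> \<le> 1 \<Longrightarrow>
    norm (shifted_poly a (t *\<^sub>R \<zeta>) / of_real t ^ M - hom_part a M \<zeta>) \<le> C * norm \<zeta> ^ Suc M * t"
proof -
  obtain C where C: "C \<ge> 0"
    and bound: "\<And>\<zeta>. norm \<zeta> \<le> 1 \<Longrightarrow> norm (shifted_poly a \<zeta> - hom_part a M \<zeta>) \<le> C * norm \<zeta> ^ Suc M"
    using shifted_poly_minus_hom_part_bound[OF fin van] by blast
  have "norm (shifted_poly a (t *\<^sub>R \<zeta>) / of_real t ^ M - hom_part a M \<zeta>) \<le> C * norm \<zeta> ^ Suc M * t"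
    if t: "0 < t" "t * norm \<zeta> \<le> 1" for t \<zeta>
  proof -
    have "shifted_poly a (t *\<^sub>R \<zeta>) / of_real t ^ M - hom_part a M \<zeta>
        = (shifted_poly a (t *\<^sub>R \<zeta>) - hom_part a M (t *\<^sub>R \<zeta>)) / of_real t ^ M"
      using t by (simp add: hom_part_scaleR diff_divide_distrib)
    also have "norm \<dots> \<le> C * (t * norm \<zeta>) ^ Suc M / t ^ M"
      using bound[of "t *\<^sub>R \<zeta>"] t by (simp add: norm_divide norm_power divide_right_mono)
    also have "\<dots> = C * norm \<zeta> ^ Suc M * t"
      using t by (simp add: field_simps)
    finally show ?thesis .
  qed
  with C show thesis using that by blast
qed

lemma tendsto_scaled_shifted_poly:
  assumes fin: "finite {\<alpha>. a \<alpha> \<noteq> 0}" and van: "vanishes_to_order_at_least a M"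
  shows "((\<lambda>t. shifted_poly a (t *\<^sub>R \<zeta>) / of_real t ^ M) \<longlongrightarrow> hom_part a M \<zeta>) (at_right 0)"
proof -
  obtain C where "C \<ge> 0" and C: "\<And>t \<zeta>. 0 < t \<Longrightarrow> t * norm \<zeta> \<le> 1 \<Longrightarrow>
      norm (shifted_poly a (t *\<^sub>R \<zeta>) / of_real t ^ M - hom_part a M \<zeta>) \<le> C * norm \<zeta> ^ Suc M * t"
    using scaled_shifted_poly_bound[OF fin van] by blast
  have small: "\<forall>\<^sub>F t in at_right 0. 0 < t \<and> t * norm \<zeta> \<le> 1"
    unfolding eventually_at_right_field
  proof (intro exI conjI allI impI)
    have nz: "0 < norm \<zeta> + 1" using norm_ge_zero[of \<zeta>] by linarith
    then show "0 < 1 / (norm \<zeta> + 1)" by simp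
    fix t :: real assume t: "0 < t" "t < 1 / (norm \<zeta> + 1)"
    then show "0 < t" by simp
    have "t * norm \<zeta> \<le> t * (norm \<zeta> + 1)" using t by simp
    also have "\<dots> < 1" using t nz by (simp add: field_simps)
    finally show "t * norm \<zeta> \<le> 1" by simp
  qed
  have "((\<lambda>t. shifted_poly a (t *\<^sub>R \<zeta>) / of_real t ^ M - hom_part a M \<zeta>) \<longlongrightarrow> 0) (at_right 0)"
  proof (rule Lim_null_comparison)
    show "\<forall>\<^sub>F t in at_right 0. norm (shifted_poly a (t *\<^sub>R \<zeta>) / of_real t ^ M - hom_part a M \<zeta>)
        \<le> C * norm \<zeta> ^ Suc M * t"
      using small by eventually_elim (use C in auto)
    show "((\<lambda>t. C * norm \<zeta> ^ Suc M * t) \<longlongrightarrow> 0) (at_right 0)"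
      using tendsto_mult[OF tendsto_const[of "C * norm \<zeta> ^ Suc M"] tendsto_ident_at[of 0 "{0<..}"]]
      by simp
  qed
  then show ?thesis by (simp add: LIM_zero_iff)
qed

lemma norm_vector_smult:
  fixes x :: "'a::real_normed_field ^ 'n"
  shows "norm (c *s x) = norm c * norm x"
  by (simp add: norm_vec_def norm_mult L2_set_right_distrib)

lemma hom_part_holomorphic_on_line: "(\<lambda>w. hom_part a j (A + w *s B)) holomorphic_on S"
  unfolding hom_part_def monom_val_def vector_add_component vector_smult_component by (intro holomorphic_intros)

lemma continuous_on_hom_part: "continuous_on S (hom_part a j)"
  unfolding hom_part_def monom_val_def by (intro continuous_intros)

lemma shifted_poly_holomorphic_on_line: "(\<lambda>w. shifted_poly a (A + w *s B)) holomorphic_on S"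
  unfolding shifted_poly_def monom_val_def vector_add_component vector_smult_component by (intro holomorphic_intros)

lemma add_smult_in_ball:
  fixes \<zeta>0 v :: "complex^'d::finite"
  assumes "0 < e" "w \<in> ball 0 (e / (norm v + 1))"
  shows "\<zeta>0 + w *s v \<in> ball \<zeta>0 e"
proof -
  have nv: "0 < norm v + 1" using norm_ge_zero[of v] by linarith
  have "norm (w *s v) \<le> norm w * (norm v + 1)" by (simp add: norm_vector_smult mult_left_mono)
  also have "\<dots> < e" using assms nv by (simp add: field_simps)
  finally show ?thesis by (simp add: dist_norm)
qed

lemma vanishing_on_open_set_along_lines:
  fixes P :: "complex^'d::finite \<Rightarrow> complex"
  assumes hol: "\<And>A B. (\<lambda>w. P (A + w *s B)) holomorphic_on UNIV"
    and U: "open U" "\<zeta>0 \<in> U" and P0: "\<And>\<zeta>. \<zeta> \<in> U \<Longrightarrow> P \<zeta> = 0"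
  shows "P \<zeta> = 0"
proof -
  obtain e where e: "0 < e" "ball \<zeta>0 e \<subseteq> U" using U open_contains_ball by blast
  define v where "v = \<zeta> - \<zeta>0"
  define r where "r = e / (norm v + 1)"
  have r: "0 < r" unfolding r_def using e(1) by (simp add: add_nonneg_pos)
  have "\<zeta>0 + w *s v \<in> U" if "w \<in> ball 0 r" for w
    using add_smult_in_ball[OF e(1)] that e(2) unfolding r_def by blast
  then have "P (\<zeta>0 + 1 *s v) = 0"
    using analytic_continuation_open[of "ball 0 r" UNIV "\<lambda>w. P (\<zeta>0 + w *s v)" "\<lambda>_. 0" 1] r hol P0
    by auto
  then show ?thesis by (simp add: v_def)
qed

lemma RHP_d_ball_Re_gt:
  assumes "\<zeta>0 \<in> RHP_d"
  obtains m where "0 < m" "\<And>\<zeta> i. \<zeta> \<in> ball \<zeta>0 m \<Longrightarrow> m < Re (\<zeta> $ i)"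
proof
  define m where "m = Min (range (\<lambda>i. Re (\<zeta>0 $ i))) / 2"
  have "2 * m \<in> range (\<lambda>i. Re (\<zeta>0 $ i))" unfolding m_def by simp
  then obtain i where "2 * m = Re (\<zeta>0 $ i)" by auto
  moreover have "0 < Re (\<zeta>0 $ i)" using assms by (simp add: RHP_d_def)
  ultimately show "0 < m" by simp
  fix \<zeta> i assume "\<zeta> \<in> ball \<zeta>0 m"
  then have "\<bar>Re (\<zeta> $ i - \<zeta>0 $ i)\<bar> < m"
    using abs_Re_le_cmod[of "\<zeta> $ i - \<zeta>0 $ i"] Finite_Cartesian_Product.norm_nth_le[of "\<zeta> - \<zeta>0" i]
    by (simp add: dist_norm norm_minus_commute)
  moreover have "2 * m \<le> Re (\<zeta>0 $ i)" unfolding m_def by simp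
  ultimately show "m < Re (\<zeta> $ i)" by simp
qed

lemma open_RHP_d: "open RHP_d"
proof (rule openI)
  fix \<zeta>0 :: "complex^'a" assume "\<zeta>0 \<in> RHP_d"
  obtain m where "0 < m" "\<And>\<zeta> i. \<zeta> \<in> ball \<zeta>0 m \<Longrightarrow> m < Re (\<zeta> $ i)"
    using \<open>\<zeta>0 \<in> RHP_d\<close> RHP_d_ball_Re_gt by blast
  then have "ball \<zeta>0 m \<subseteq> RHP_d" by (auto simp: RHP_d_def intro: less_trans)
  with \<open>0 < m\<close> show "\<exists>e>0. ball \<zeta>0 e \<subseteq> RHP_d" by blast
qed

lemma norm_one_minus_less_one:
  assumes "0 < t" "t * (norm z)\<^sup>2 < 2 * Re z"
  shows "norm (1 - of_real t * z) < 1"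
proof -
  have "(norm (1 - of_real t * z))\<^sup>2 = (1 - t * Re z)\<^sup>2 + (t * Im z)\<^sup>2"
    by (simp add: cmod_power2)
  also have "\<dots> = 1 - t * (2 * Re z - t * (norm z)\<^sup>2)"
    unfolding cmod_power2 by (simp add: power2_eq_square algebra_simps)
  also have "\<dots> < 1" using assms by simp
  finally show ?thesis by (simp add: power2_less_imp_less)
qed

lemma uvec_minus_scaleR_in_polydisc:
  assumes "\<And>i. m < Re (\<zeta> $ i)" "norm \<zeta> \<le> B" "0 < t" "t * B\<^sup>2 \<le> m"
  shows "uvec - t *\<^sub>R \<zeta> \<in> polydisc"
proof -
  have "norm (1 - of_real t * \<zeta> $ i) < 1" for i
  proof (rule norm_one_minus_less_one)
    have "(norm (\<zeta> $ i))\<^sup>2 \<le> B\<^sup>2"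
      using Finite_Cartesian_Product.norm_nth_le[of \<zeta> i] assms(2) by (simp add: power_mono)
    then have "t * (norm (\<zeta> $ i))\<^sup>2 \<le> m" using assms(3,4) by (meson mult_left_mono less_imp_le order_trans)
    moreover have "0 \<le> t * (norm (\<zeta> $ i))\<^sup>2" using assms(3) by simp
    ultimately show "t * (norm (\<zeta> $ i))\<^sup>2 < 2 * Re (\<zeta> $ i)" using assms(1)[of i] by linarith
  qed (use assms in simp)
  moreover have "(uvec - t *\<^sub>R \<zeta>) $ i = 1 - of_real t * \<zeta> $ i" for i
    unfolding uvec_def vector_minus_component vector_scaleR_component vec_lambda_beta
    by (simp add: scaleR_conv_of_real)
  ultimately show ?thesis by (simp add: polydisc_def)
qed

lemma uniform_limit_scaled_shifted_poly:
  assumes fin: "finite {\<alpha>. a \<alpha> \<noteq> 0}" and van: "vanishes_to_order_at_least a M"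
    and bounded: "\<And>w. w \<in> S \<Longrightarrow> norm (\<phi> w) \<le> B"
    and t: "\<And>n. 0 < t n" "t \<longlonglongrightarrow> 0"
  shows "uniform_limit S (\<lambda>n w. shifted_poly a (t n *\<^sub>R \<phi> w) / of_real (t n) ^ M)
    (\<lambda>w. hom_part a M (\<phi> w)) sequentially"
  unfolding uniform_limit_iff
proof (intro allI impI)
  fix e :: real assume "0 < e"
  obtain C where C: "C \<ge> 0" and bound: "\<And>t \<zeta>. 0 < t \<Longrightarrow> t * norm \<zeta> \<le> 1 \<Longrightarrow>
      norm (shifted_poly a (t *\<^sub>R \<zeta>) / of_real t ^ M - hom_part a M \<zeta>) \<le> C * norm \<zeta> ^ Suc M * t"
    using scaled_shifted_poly_bound[OF fin van] by blast
  define B' where "B' = max B 0 + 1"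
  have B': "0 < B'" "\<And>w. w \<in> S \<Longrightarrow> norm (\<phi> w) \<le> B'"
    using bounded unfolding B'_def by (auto intro: order_trans[of _ B])
  have "\<forall>\<^sub>F n in sequentially. t n * B' < 1"
    using order_tendstoD(2)[OF tendsto_mult_left_zero[OF t(2)] zero_less_one] .
  moreover have "\<forall>\<^sub>F n in sequentially. C * B' ^ Suc M * t n < e"
    using order_tendstoD(2)[OF tendsto_mult_right_zero[OF t(2)] \<open>0 < e\<close>] .
  ultimately have "\<forall>\<^sub>F n in sequentially. t n * B' < 1 \<and> C * B' ^ Suc M * t n < e"
    by (rule eventually_conj)
  then show "\<forall>\<^sub>F n in sequentially. \<forall>w\<in>S.
      dist (shifted_poly a (t n *\<^sub>R \<phi> w) / of_real (t n) ^ M) (hom_part a M (\<phi> w)) < e"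
  proof (rule eventually_mono, intro ballI)
    fix n w assume n: "t n * B' < 1 \<and> C * B' ^ Suc M * t n < e" and "w \<in> S"
    then have "norm (\<phi> w) \<le> B'" by (intro B'(2))
    then have "t n * norm (\<phi> w) \<le> 1"
      using n t(1)[of n] by (meson less_imp_le mult_left_mono order_trans)
    then have "dist (shifted_poly a (t n *\<^sub>R \<phi> w) / of_real (t n) ^ M) (hom_part a M (\<phi> w))
        \<le> C * norm (\<phi> w) ^ Suc M * t n"
      using bound[OF t(1)] by (simp add: dist_norm)
    also have "\<dots> \<le> C * B' ^ Suc M * t n"
      using C t(1)[of n] \<open>norm (\<phi> w) \<le> B'\<close>
      by (intro mult_right_mono mult_left_mono power_mono) auto
    also have "\<dots> < e" using n by simp
    finally show "dist (shifted_poly a (t n *\<^sub>R \<phi> w) / of_real (t n) ^ M) (hom_part a M (\<phi> w)) < e" .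
  qed
qed

lemma scaleR_add_smult:
  fixes A B :: "'a::real_algebra_1 ^ 'n"
  shows "t *\<^sub>R (A + w *s B) = t *\<^sub>R A + w *s (t *\<^sub>R B)"
  by (simp add: vec_eq_iff scaleR_add_right)

lemma line_through_RHP_d_bounds:
  fixes \<zeta>0 v :: "complex^'d::finite"
  assumes "\<zeta>0 \<in> RHP_d"
  obtains r m B where "0 < r" "0 < m" "0 < B"
    and "\<And>w i. w \<in> ball 0 r \<Longrightarrow> m < Re ((\<zeta>0 + w *s v) $ i)"
    and "\<And>w. w \<in> ball 0 r \<Longrightarrow> norm (\<zeta>0 + w *s v) \<le> B"
proof -
  obtain m where m: "0 < m" "\<And>\<zeta> i. \<zeta> \<in> ball \<zeta>0 m \<Longrightarrow> m < Re (\<zeta> $ i)"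
    using assms RHP_d_ball_Re_gt by blast
  define r where "r = m / (norm v + 1)"
  have r: "0 < r" unfolding r_def using m(1) by (simp add: add_nonneg_pos)
  have line: "\<zeta>0 + w *s v \<in> ball \<zeta>0 m" if "w \<in> ball 0 r" for w
    using add_smult_in_ball[OF m(1)] that unfolding r_def .
  have "norm (\<zeta>0 + w *s v) \<le> norm \<zeta>0 + m" if "w \<in> ball 0 r" for w
    using line[OF that] norm_triangle_ineq2[of "\<zeta>0 + w *s v" \<zeta>0]
    by (simp add: dist_norm norm_minus_commute)
  moreover have "0 < norm \<zeta>0 + m" using m(1) by (simp add: add_nonneg_pos)
  ultimately show thesis using that r m(1) m(2)[OF line] by blast
qed

lemma hom_part_nonzero_on_RHP_d:
  assumes fin: "finite {\<alpha>. a \<alpha> \<noteq> 0}" and nz: "\<forall>z\<in>polydisc. poly_at_u a z \<noteq> 0"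
    and vto: "vanishes_to_order a M" and "\<zeta>0 \<in> RHP_d"
  shows "hom_part a M \<zeta>0 \<noteq> 0"
proof
  assume P0: "hom_part a M \<zeta>0 = 0"
  obtain \<zeta>1 where P1: "hom_part a M \<zeta>1 \<noteq> 0" using vto by (auto simp: vanishes_to_order_def)
  define v where "v = \<zeta>1 - \<zeta>0"
  obtain r m B where r: "0 < r" and "0 < m" "0 < B"
    and Re_line: "\<And>w i. w \<in> ball 0 r \<Longrightarrow> m < Re ((\<zeta>0 + w *s v) $ i)"
    and norm_line: "\<And>w. w \<in> ball 0 r \<Longrightarrow> norm (\<zeta>0 + w *s v) \<le> B"
    using line_through_RHP_d_bounds[OF \<open>\<zeta>0 \<in> RHP_d\<close>] by blast
  define t where "t n = m / B\<^sup>2 / real (Suc n)" for n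
  have t: "0 < t n" "t n * B\<^sup>2 \<le> m" for n
  proof -
    show "0 < t n" unfolding t_def using \<open>0 < m\<close> \<open>0 < B\<close> by simp
    have "t n * B\<^sup>2 = m / real (Suc n)" unfolding t_def using \<open>0 < B\<close> by simp
    also have "\<dots> \<le> m" using \<open>0 < m\<close> by (simp add: divide_le_eq)
    finally show "t n * B\<^sup>2 \<le> m" .
  qed
  define F where "F n w = shifted_poly a (t n *\<^sub>R (\<zeta>0 + w *s v)) / of_real (t n) ^ M" for n w
  define g where "g w = hom_part a M (\<zeta>0 + w *s v)" for w
  have g_holo: "g holomorphic_on S" for S unfolding g_def by (rule hom_part_holomorphic_on_line)
  have "g 0 \<noteq> 0"
  proof (rule Hurwitz_no_zeros[of "ball 0 r" F g])
    show "F n holomorphic_on ball 0 r" for n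
      unfolding F_def scaleR_add_smult
      by (intro holomorphic_intros shifted_poly_holomorphic_on_line) (use t in auto)
    show "uniform_limit K F g sequentially" if "K \<subseteq> ball 0 r" for K
      unfolding F_def g_def
    proof (rule uniform_limit_scaled_shifted_poly[OF fin vanishes_to_order_imp_at_least[OF vto], where B = B])
      show "t \<longlonglongrightarrow> 0" unfolding t_def by (rule LIMSEQ_Suc[OF lim_const_over_n])
    qed (use that norm_line t in auto)
    show "F n w \<noteq> 0" if "w \<in> ball 0 r" for n w
    proof -
      have "uvec - t n *\<^sub>R (\<zeta>0 + w *s v) \<in> polydisc"
        by (rule uvec_minus_scaleR_in_polydisc[where m = m and B = B]) (use that Re_line norm_line t in auto)
      then have "shifted_poly a (t n *\<^sub>R (\<zeta>0 + w *s v)) \<noteq> 0" using nz by (metis poly_at_u_diff)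
      then show ?thesis using t(1)[of n] by (simp add: F_def)
    qed
    show "\<not> g constant_on ball 0 r"
    proof
      assume "g constant_on ball 0 r"
      then obtain y where "\<And>w. w \<in> ball 0 r \<Longrightarrow> g w = y" by (auto simp: constant_on_def)
      moreover have "g 0 = 0" using P0 by (simp add: g_def)
      ultimately have "g w = 0" if "w \<in> ball 0 r" for w using that r by force
      then have "g 1 = 0"
        using analytic_continuation_open[of "ball 0 r" UNIV g "\<lambda>_. 0" 1] r g_holo by auto
      then show False using P1 by (simp add: g_def v_def)
    qed
  qed (use r g_holo in auto)
  then show False using P0 by (simp add: g_def)
qed

lemma Dset_pos:
  assumes "\<zeta> \<in> RHP_d" "x \<in> Dset \<zeta>"
  shows "0 < x"
proof -
  obtain i where "x = norm (\<zeta> $ i) \<or> x = Re (\<zeta> $ i)" using assms(2) by (auto simp: Dset_def)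
  moreover have "0 < Re (\<zeta> $ i)" using assms(1) by (simp add: RHP_d_def)
  ultimately show ?thesis using abs_Re_le_cmod[of "\<zeta> $ i"] by auto
qed

lemma Dset_scaleR: "0 < t \<Longrightarrow> Dset (t *\<^sub>R \<zeta>) = (\<lambda>x. t * x) ` Dset \<zeta>"
  by (auto simp: Dset_def image_Un image_image)

lemma scaleR_in_AR:
  assumes "\<zeta> \<in> AR c" "0 < t"
  shows "t *\<^sub>R \<zeta> \<in> AR c"
proof -
  have "t *\<^sub>R \<zeta> \<in> RHP_d" using assms by (auto simp: AR_def RHP_d_def)
  moreover have "\<forall>x\<in>Dset \<zeta>. \<forall>y\<in>Dset \<zeta>. 1/c \<le> x/y \<and> x/y \<le> c" using assms(1) by (simp add: AR_def)
  ultimately show ?thesis using assms(2) by (simp add: AR_def Dset_scaleR)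
qed

lemma RHP_d_subset_AR:
  assumes "\<zeta> \<in> RHP_d"
  obtains c where "1 < c" "\<zeta> \<in> AR c"
proof
  define D where "D = Dset \<zeta>"
  have D: "finite D" "D \<noteq> {}" unfolding D_def Dset_def by auto
  have pos: "0 < x" if "x \<in> D" for x using Dset_pos[OF assms] that by (simp add: D_def)
  define c where "c = Max D / Min D + 1"
  have ratio: "x / y < c" if "x \<in> D" "y \<in> D" for x y
  proof -
    have "x \<le> Max D" "Min D \<le> y" "0 < Min D" "0 < x" using that D pos by auto
    then have "x / y \<le> Max D / Min D" by (intro frac_le) auto
    then show ?thesis unfolding c_def by simp
  qed
  have "Min D \<le> Max D" "0 < Min D" using D pos by auto
  then have "1 \<le> Max D / Min D" by simp
  then show "1 < c" unfolding c_def by simp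
  have "1 / c \<le> x / y \<and> x / y \<le> c" if "x \<in> D" "y \<in> D" for x y
  proof
    have "1 / c \<le> 1 / (y / x)"
      using ratio[of y x] that pos \<open>1 < c\<close> by (intro divide_left_mono) auto
    then show "1 / c \<le> x / y" by simp
  qed (use ratio that in \<open>simp add: less_imp_le\<close>)
  with assms show "\<zeta> \<in> AR c" by (simp add: AR_def D_def)
qed

lemma AR_component_bound:
  assumes "\<zeta> \<in> AR c"
  shows "norm (\<zeta> $ i) \<le> c * Re (\<zeta> $ j)"
proof -
  have "0 < Re (\<zeta> $ j)" using assms by (simp add: AR_def RHP_d_def)
  moreover have "norm (\<zeta> $ i) / Re (\<zeta> $ j) \<le> c" using assms by (auto simp: AR_def Dset_def)
  ultimately show ?thesis by (simp add: divide_le_eq)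
qed

lemma hom_part_lower_bound_on_AR:
  fixes a :: "('d::finite) multiidx \<Rightarrow> complex"
  assumes nz: "\<forall>\<zeta>\<in>RHP_d. hom_part a M \<zeta> \<noteq> 0" and "0 < c"
  obtains k where "0 < k" "\<And>\<zeta>. \<zeta> \<in> AR c \<Longrightarrow> k * norm \<zeta> ^ M \<le> norm (hom_part a M \<zeta>)"
proof -
  define K :: "(complex^'d) set"
    where "K = {\<zeta>. norm \<zeta> = 1 \<and> (\<forall>i j. norm (\<zeta> $ i) \<le> c * Re (\<zeta> $ j))}"
  have "compact K"
    unfolding K_def compact_eq_bounded_closed bounded_iff
    by (intro conjI closed_Collect_conj closed_Collect_all closed_Collect_le closed_Collect_eq
        continuous_intros) auto
  have K_RHP: "K \<subseteq> RHP_d"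
  proof
    fix \<zeta> :: "complex^'d" assume "\<zeta> \<in> K"
    then have "\<zeta> \<noteq> 0" by (auto simp: K_def)
    then obtain i where i: "\<zeta> $ i \<noteq> 0" by (auto simp: vec_eq_iff)
    show "\<zeta> \<in> RHP_d" unfolding RHP_d_def
    proof (intro CollectI allI)
      fix j
      have "0 < norm (\<zeta> $ i)" using i by simp
      also have "\<dots> \<le> c * Re (\<zeta> $ j)" using \<open>\<zeta> \<in> K\<close> by (simp add: K_def)
      finally show "0 < Re (\<zeta> $ j)" using \<open>0 < c\<close> by (simp add: zero_less_mult_iff)
    qed
  qed
  have normalized_in_K: "\<zeta> \<noteq> 0 \<and> (1 / norm \<zeta>) *\<^sub>R \<zeta> \<in> K" if "\<zeta> \<in> AR c" for \<zeta>
  proof -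
    have "\<zeta> \<noteq> 0" using that by (auto simp: AR_def RHP_d_def)
    then show ?thesis
      using AR_component_bound[OF that] unfolding K_def
      by (simp add: divide_right_mono mult.commute)
  qed
  show thesis
  proof (cases "K = {}")
    case True
    then show thesis using that[of 1] normalized_in_K by auto
  next
    case False
    obtain x where x: "x \<in> K" and x_min: "\<And>y. y \<in> K \<Longrightarrow> norm (hom_part a M x) \<le> norm (hom_part a M y)"
      using continuous_attains_inf[OF \<open>compact K\<close> False continuous_on_norm[OF continuous_on_hom_part]]
      by blast
    show thesis
    proof (rule that)
      show "0 < norm (hom_part a M x)" using nz K_RHP x by auto
      fix \<zeta> :: "complex^'d" assume "\<zeta> \<in> AR c"
      then have "norm (hom_part a M x) \<le> norm (hom_part a M ((1 / norm \<zeta>) *\<^sub>R \<zeta>))"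
        using x_min normalized_in_K by blast
      also have "\<dots> = norm (hom_part a M \<zeta>) / norm \<zeta> ^ M"
        by (simp add: hom_part_scaleR norm_mult norm_power norm_divide power_one_over)
      finally show "norm (hom_part a M x) * norm \<zeta> ^ M \<le> norm (hom_part a M \<zeta>)"
        using normalized_in_K[OF \<open>\<zeta> \<in> AR c\<close>] by (simp add: field_simps)
    qed
  qed
qed

lemma norm_quotient_minus_le:
  fixes A B P \<beta> :: complex
  assumes "0 < k" "0 < s" "k * s ^ M \<le> norm P" "Ca * s \<le> k / 2"
    and "norm (A - P) \<le> Ca * s ^ Suc M" "norm (B - \<beta> * P) \<le> Cb * s ^ Suc M"
  shows "norm (B / A - \<beta>) \<le> 2 * (Cb + norm \<beta> * Ca) / k * s"
proof -
  have "Ca * s ^ Suc M \<le> k / 2 * s ^ M"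
    using mult_right_mono[OF assms(4), of "s ^ M"] assms(2) by (simp add: mult_ac)
  then have A_ge: "k / 2 * s ^ M \<le> norm A"
    using assms(3,5) norm_triangle_ineq2[of P A] by (simp add: norm_minus_commute)
  have A_pos: "0 < k / 2 * s ^ M" using assms(1,2) by simp
  have "norm (B - \<beta> * A) = norm ((B - \<beta> * P) - \<beta> * (A - P))" by (simp add: algebra_simps)
  also have "\<dots> \<le> Cb * s ^ Suc M + norm \<beta> * (Ca * s ^ Suc M)"
    using assms(5,6) norm_triangle_ineq4 norm_ge_zero[of \<beta>]
    by (smt (verit, best) mult_left_mono norm_mult)
  finally have num: "norm (B - \<beta> * A) \<le> (Cb + norm \<beta> * Ca) * s ^ Suc M" by (simp add: algebra_simps)
  have "A \<noteq> 0" using A_ge A_pos by auto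
  then have "B / A - \<beta> = (B - \<beta> * A) / A" by (simp add: diff_divide_distrib)
  then have "norm (B / A - \<beta>) = norm (B - \<beta> * A) / norm A" by (simp add: norm_divide)
  also have "\<dots> \<le> (Cb + norm \<beta> * Ca) * s ^ Suc M / (k / 2 * s ^ M)"
    using num A_ge A_pos order_trans[OF norm_ge_zero num] by (intro frac_le)
  also have "\<dots> = 2 * (Cb + norm \<beta> * Ca) / k * s" using assms(1,2) by (simp add: field_simps)
  finally show ?thesis .
qed

lemma nt_limit_if_leading_terms_proportional:
  assumes fina: "finite {\<alpha>. a \<alpha> \<noteq> 0}" and finb: "finite {\<alpha>. b \<alpha> \<noteq> 0}"
    and vana: "vanishes_to_order_at_least a M" and vanb: "vanishes_to_order_at_least b M"
    and nz: "\<forall>\<zeta>\<in>RHP_d. hom_part a M \<zeta> \<noteq> 0"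
    and proportional: "\<And>\<zeta>. hom_part b M \<zeta> = \<beta> * hom_part a M \<zeta>"
  shows "nt_limit (\<lambda>z. poly_at_u b z / poly_at_u a z) \<beta>"
  unfolding nt_limit_def
proof (intro allI impI)
  fix c :: real assume "1 < c"
  then have "0 < c" by simp
  obtain k where k: "0 < k" and lower: "\<And>\<zeta>. \<zeta> \<in> AR c \<Longrightarrow> k * norm \<zeta> ^ M \<le> norm (hom_part a M \<zeta>)"
    using hom_part_lower_bound_on_AR[OF nz \<open>0 < c\<close>] by blast
  obtain Ca where Ca: "Ca \<ge> 0" "\<And>\<zeta>. norm \<zeta> \<le> 1 \<Longrightarrow>
      norm (shifted_poly a \<zeta> - hom_part a M \<zeta>) \<le> Ca * norm \<zeta> ^ Suc M"
    using shifted_poly_minus_hom_part_bound[OF fina vana] by blast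
  obtain Cb where "Cb \<ge> 0" "\<And>\<zeta>. norm \<zeta> \<le> 1 \<Longrightarrow>
      norm (shifted_poly b \<zeta> - hom_part b M \<zeta>) \<le> Cb * norm \<zeta> ^ Suc M"
    using shifted_poly_minus_hom_part_bound[OF finb vanb] by blast
  then have Cb: "norm (shifted_poly b \<zeta> - \<beta> * hom_part a M \<zeta>) \<le> Cb * norm \<zeta> ^ Suc M"
    if "norm \<zeta> \<le> 1" for \<zeta>
    using that by (simp add: proportional)
  define K where "K = 2 * (Cb + norm \<beta> * Ca) / k"
  define \<delta> where "\<delta> = min 1 (k / (2 * (Ca + 1)))"
  have "\<forall>\<^sub>F \<zeta> in at 0 within AR c. \<zeta> \<in> AR c \<and> 0 < norm \<zeta> \<and> norm \<zeta> < \<delta>"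
    using k Ca(1) by (auto simp: \<delta>_def eventually_at dist_norm intro!: exI[of _ \<delta>])
  then have "\<forall>\<^sub>F \<zeta> in at 0 within AR c.
      norm (poly_at_u b (uvec - \<zeta>) / poly_at_u a (uvec - \<zeta>) - \<beta>) \<le> K * norm \<zeta>"
  proof eventually_elim
    case (elim \<zeta>)
    have "Ca * norm \<zeta> \<le> (Ca + 1) * (k / (2 * (Ca + 1)))"
      using elim Ca(1) unfolding \<delta>_def by (intro mult_mono) auto
    also have "\<dots> = k / 2" using Ca(1) by (simp add: field_simps)
    finally have "Ca * norm \<zeta> \<le> k / 2" .
    then show ?case
      unfolding poly_at_u_diff K_def using elim lower k Ca(2) Cb \<delta>_def
      by (intro norm_quotient_minus_le) auto
  qed
  moreover have "((\<lambda>\<zeta>. K * norm \<zeta>) \<longlongrightarrow> 0) (at 0 within AR c)"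
    by (rule tendsto_mult_right_zero[OF tendsto_norm_zero[OF tendsto_ident_at]])
  ultimately have "((\<lambda>\<zeta>. poly_at_u b (uvec - \<zeta>) / poly_at_u a (uvec - \<zeta>) - \<beta>) \<longlongrightarrow> 0) (at 0 within AR c)"
    by (rule Lim_null_comparison)
  then show "((\<lambda>\<zeta>. poly_at_u b (uvec - \<zeta>) / poly_at_u a (uvec - \<zeta>)) \<longlongrightarrow> \<beta>) (at 0 within AR c)"
    by (simp add: LIM_zero_iff)
qed

lemma leading_terms_proportional_on_RHP_d:
  assumes fina: "finite {\<alpha>. a \<alpha> \<noteq> 0}" and finb: "finite {\<alpha>. b \<alpha> \<noteq> 0}"
    and vana: "vanishes_to_order_at_least a M" and vanb: "vanishes_to_order_at_least b M"
    and nz: "hom_part a M \<zeta> \<noteq> 0" and "\<zeta> \<in> RHP_d"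
    and lim: "nt_limit (\<lambda>z. poly_at_u b z / poly_at_u a z) L"
  shows "hom_part b M \<zeta> = L * hom_part a M \<zeta>"
proof -
  obtain c where "1 < c" "\<zeta> \<in> AR c" using RHP_d_subset_AR[OF \<open>\<zeta> \<in> RHP_d\<close>] .
  have "\<zeta> \<noteq> 0" using \<open>\<zeta> \<in> RHP_d\<close> by (auto simp: RHP_d_def)
  have "filterlim (\<lambda>t. t *\<^sub>R \<zeta>) (at 0 within AR c) (at_right (0::real))"
    unfolding filterlim_at
  proof
    show "\<forall>\<^sub>F t in at_right 0. t *\<^sub>R \<zeta> \<in> AR c \<and> t *\<^sub>R \<zeta> \<noteq> 0"
      using eventually_at_right_less[of 0] by eventually_elim (use \<open>\<zeta> \<in> AR c\<close> \<open>\<zeta> \<noteq> 0\<close> scaleR_in_AR in auto)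
    show "((\<lambda>t. t *\<^sub>R \<zeta>) \<longlongrightarrow> 0) (at_right 0)"
      using tendsto_scaleR[OF tendsto_ident_at[of 0 "{0<..}"] tendsto_const[of \<zeta>]] by simp
  qed
  then have f_ray: "((\<lambda>t. shifted_poly b (t *\<^sub>R \<zeta>) / shifted_poly a (t *\<^sub>R \<zeta>)) \<longlongrightarrow> L) (at_right 0)"
    using filterlim_compose[OF lim[unfolded nt_limit_def, rule_format, OF \<open>1 < c\<close>]]
    by (simp add: poly_at_u_diff)
  define Ea where "Ea t = shifted_poly a (t *\<^sub>R \<zeta>) / of_real t ^ M" for t
  define Eb where "Eb t = shifted_poly b (t *\<^sub>R \<zeta>) / of_real t ^ M" for t
  have Ea: "(Ea \<longlongrightarrow> hom_part a M \<zeta>) (at_right 0)"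
    unfolding Ea_def by (rule tendsto_scaled_shifted_poly[OF fina vana])
  have Eb: "(Eb \<longlongrightarrow> hom_part b M \<zeta>) (at_right 0)"
    unfolding Eb_def by (rule tendsto_scaled_shifted_poly[OF finb vanb])
  have "\<forall>\<^sub>F t in at_right 0. Ea t \<noteq> 0" by (rule tendsto_imp_eventually_ne[OF Ea nz])
  then have "\<forall>\<^sub>F t in at_right 0.
      shifted_poly b (t *\<^sub>R \<zeta>) / shifted_poly a (t *\<^sub>R \<zeta>) * Ea t = Eb t"
    by eventually_elim (simp add: Ea_def Eb_def)
  then have "(Eb \<longlongrightarrow> L * hom_part a M \<zeta>) (at_right 0)"
    using Lim_transform_eventually[OF tendsto_mult[OF f_ray Ea]] by blast
  then show ?thesis using tendsto_unique[OF _ Eb] by simp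
qed

lemma leading_terms_proportional_if_nt_limit:
  assumes fina: "finite {\<alpha>. a \<alpha> \<noteq> 0}" and finb: "finite {\<alpha>. b \<alpha> \<noteq> 0}"
    and vana: "vanishes_to_order_at_least a M" and vanb: "vanishes_to_order_at_least b M"
    and nz: "\<forall>\<zeta>\<in>RHP_d. hom_part a M \<zeta> \<noteq> 0"
    and lim: "nt_limit (\<lambda>z. poly_at_u b z / poly_at_u a z) L"
  shows "hom_part b M \<zeta> = L * hom_part a M \<zeta>"
proof -
  have "uvec \<in> RHP_d" by (simp add: RHP_d_def uvec_def)
  have "hom_part b M \<zeta> - L * hom_part a M \<zeta> = 0"
  proof (rule vanishing_on_open_set_along_lines[OF _ open_RHP_d \<open>uvec \<in> RHP_d\<close>])
    show "(\<lambda>w. hom_part b M (A + w *s B) - L * hom_part a M (A + w *s B)) holomorphic_on UNIV" for A B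
      by (intro holomorphic_intros hom_part_holomorphic_on_line)
    show "hom_part b M \<zeta>' - L * hom_part a M \<zeta>' = 0" if "\<zeta>' \<in> RHP_d" for \<zeta>'
      using leading_terms_proportional_on_RHP_d[OF fina finb vana vanb _ that lim] nz that by simp
  qed
  then show ?thesis by simp
qed

theorem proposition14p3:
  fixes a b :: "('d::finite) multiidx \<Rightarrow> complex" and M :: nat
  assumes "finite {\<alpha>. a \<alpha> \<noteq> 0}" and "finite {\<alpha>. b \<alpha> \<noteq> 0}"
    and "\<forall>z\<in>polydisc. poly_at_u a z \<noteq> 0"
    and "vanishes_to_order a M"
    and "vanishes_to_order_at_least b M"
  defines "f \<equiv> (\<lambda>z. poly_at_u b z / poly_at_u a z)"
  shows "((\<exists>L. nt_limit f L) \<longleftrightarrow> (\<exists>\<beta>. \<forall>\<zeta>. hom_part b M \<zeta> = \<beta> * hom_part a M \<zeta>))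
    \<and> (\<forall>\<beta>. (\<forall>\<zeta>. hom_part b M \<zeta> = \<beta> * hom_part a M \<zeta>) \<longrightarrow> nt_limit f \<beta>)"
proof -
  note fina = assms(1) and finb = assms(2) and vanb = assms(5)
  have vana: "vanishes_to_order_at_least a M"
    using assms(4) by (rule vanishes_to_order_imp_at_least)
  have nz: "\<forall>\<zeta>\<in>RHP_d. hom_part a M \<zeta> \<noteq> 0"
    using hom_part_nonzero_on_RHP_d[OF fina assms(3,4)] by blast
  have sufficient: "nt_limit f \<beta>" if "\<forall>\<zeta>. hom_part b M \<zeta> = \<beta> * hom_part a M \<zeta>" for \<beta>
    unfolding f_def using nt_limit_if_leading_terms_proportional[OF fina finb vana vanb nz] that by blast
  have necessary: "\<exists>\<beta>. \<forall>\<zeta>. hom_part b M \<zeta> = \<beta> * hom_part a M \<zeta>" if "nt_limit f L" for L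
    using leading_terms_proportional_if_nt_limit[OF fina finb vana vanb nz] that unfolding f_def by blast
  show ?thesis using sufficient necessary by blast
qed

end
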